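(* Let $R$ be a ring with identity and involution $*$, and let $a,b\in R$ with $aR=a^2R$. The following are equivalent: (1) $a$ is core invertible with $a^{\oplus}=b$; (2) $ba^2=a$, $(ab)^*=ab$ and $bR\subseteq aR$; (3) $a$ has a $\{1,3\}$-inverse, and $ba^2=a$ and $b=ba\hat a$ for some $\{1,3\}$-inverse $\hat a$ of $a$.
   Context: An involution on $R$ satisfies $(a^* )^*=a$, $(ab)^*=b^*a^*$, $(a+b)^*=a^*+b^*$. An element $x\in R$ is a core inverse of $a$ if $axa=a$, $xR=aR$ and $Rx=Ra^*$; it is unique when it exists and is denoted $a^{\oplus}$. An element $\hat a$ is a $\{1,3\}$-inverse of $a$ if $a\hat a a=a$ and $(a\hat a)^*=a\hat a$. $cR=\{cr: r\in R\}$. *)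

theory Defs
  imports Main
begin

definition involution :: "('a::ring_1 \<Rightarrow> 'a) \<Rightarrow> bool" where
  "involution s \<longleftrightarrow> (\<forall>a. s (s a) = a) \<and> (\<forall>a b. s (a * b) = s b * s a)
      \<and> (\<forall>a b. s (a + b) = s a + s b)"

definition rideal :: "'a::ring_1 \<Rightarrow> 'a set" where
  "rideal c = {c * r | r. True}"

definition lideal :: "'a::ring_1 \<Rightarrow> 'a set" where
  "lideal c = {r * c | r. True}"

definition core_inverse :: "('a::ring_1 \<Rightarrow> 'a) \<Rightarrow> 'a \<Rightarrow> 'a \<Rightarrow> bool" where
  "core_inverse s a x \<longleftrightarrow> a * x * a = a \<and> rideal x = rideal a \<and> lideal x = lideal (s a)"

definition core_invertible :: "('a::ring_1 \<Rightarrow> 'a) \<Rightarrow> 'a \<Rightarrow> bool" where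
  "core_invertible s a \<longleftrightarrow> (\<exists>x. core_inverse s a x)"

definition inv13 :: "('a::ring_1 \<Rightarrow> 'a) \<Rightarrow> 'a \<Rightarrow> 'a \<Rightarrow> bool" where
  "inv13 s a x \<longleftrightarrow> a * x * a = a \<and> s (a * x) = a * x"

end

theory Submission
  imports Defs
begin

text \<open>A core inverse b of a is a reflexive inner inverse with ab hermitian and bR = aR;
  conversely these properties already force Rb = Ra*, because b = b(ab) = b b* a* and
  a* = a*(ab)* = a* a b. The hypothesis aR = a a R, i.e. a = a a w, turns b a a = a into
  a b a = a and gives b a = b a a w = a w, so that b = b a x lies in aR. For a {1,3}-inverse x
  with b = b a x, the element ab = abax = ax is hermitian.\<close>

lemma rideal_subset_iff: "rideal x \<subseteq> rideal y \<longleftrightarrow> (\<exists>r. x = y * r)"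
proof
  assume "rideal x \<subseteq> rideal y"
  moreover have "x \<in> rideal x"
    unfolding rideal_def by (metis (mono_tags, lifting) mem_Collect_eq mult.right_neutral)
  ultimately show "\<exists>r. x = y * r"
    unfolding rideal_def by blast
qed (auto simp: rideal_def mult.assoc)

lemma lideal_subset_iff: "lideal x \<subseteq> lideal y \<longleftrightarrow> (\<exists>r. x = r * y)"
proof
  assume "lideal x \<subseteq> lideal y"
  moreover have "x \<in> lideal x"
    unfolding lideal_def by (metis (mono_tags, lifting) mem_Collect_eq mult.left_neutral)
  ultimately show "\<exists>r. x = r * y"
    unfolding lideal_def by blast
qed (auto simp: lideal_def mult.assoc[symmetric])

lemma involution_mult: "involution s \<Longrightarrow> s (x * y) = s y * s x"
  unfolding involution_def by blast

lemma involution_involutive: "involution s \<Longrightarrow> s (s x) = x"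
  unfolding involution_def by blast

lemma core_inverse_hermitian:
  assumes inv: "involution s" and core: "core_inverse s a b"
  shows "s (a * b) = a * b"
proof -
  have aba: "a * b * a = a"
    using core unfolding core_inverse_def by blast
  obtain r where r: "b = r * s a"
    using core lideal_subset_iff[of b "s a"] unfolding core_inverse_def by auto
  have "s a = s a * s (a * b)"
    using aba involution_mult[OF inv, of "a * b" a] by (simp add: mult.assoc)
  then have "b = b * s (a * b)"
    using r by (metis mult.assoc)
  then have ab: "a * b = a * b * s (a * b)"
    by (metis mult.assoc)
  have "s (a * b * s (a * b)) = a * b * s (a * b)"
    by (simp add: involution_mult[OF inv] involution_involutive[OF inv] mult.assoc)
  then show ?thesis
    using ab by simp
qed

lemma core_inverse_reflexive:
  assumes inv: "involution s" and core: "core_inverse s a b"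
  shows "b * a * b = b"
proof -
  have aba: "a * b * a = a"
    using core unfolding core_inverse_def by blast
  obtain r where r: "b = r * s a"
    using core lideal_subset_iff[of b "s a"] unfolding core_inverse_def by auto
  have "s a * (a * b) = s (a * b * a)"
    using core_inverse_hermitian[OF inv core] by (simp add: involution_mult[OF inv] mult.assoc)
  then show ?thesis
    using r aba by (simp add: mult.assoc)
qed

lemma core_inverse_mult_square:
  assumes inv: "involution s" and core: "core_inverse s a b"
  shows "b * a * a = a"
proof -
  obtain u where u: "a = b * u"
    using core rideal_subset_iff[of a b] unfolding core_inverse_def by auto
  then have "b * a * a = b * a * b * u"
    by (simp add: mult.assoc)
  then show ?thesis
    using core_inverse_reflexive[OF inv core] u by simp
qed

lemma core_inverse_imp_inv13:
  "involution s \<Longrightarrow> core_inverse s a b \<Longrightarrow> inv13 s a b"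
  using core_inverse_hermitian unfolding core_inverse_def inv13_def by blast

lemma core_inverseI:
  assumes inv: "involution s" and aba: "a * b * a = a" and baa: "b * a * a = a"
    and herm: "s (a * b) = a * b" and range: "rideal b \<subseteq> rideal a"
  shows "core_inverse s a b"
proof -
  obtain v where v: "b = a * v"
    using range rideal_subset_iff by blast
  have bab: "b * a * b = b"
    using baa v by (metis mult.assoc)
  have "a = b * (a * a)"
    using baa by (simp add: mult.assoc)
  then have "rideal b = rideal a"
    using range rideal_subset_iff[of a b] by blast
  moreover have "b = b * s b * s a"
    using bab herm involution_mult[OF inv, of a b] by (metis mult.assoc)
  moreover have "s a = s a * a * b"
    using aba herm involution_mult[OF inv, of "a * b" a] by (metis mult.assoc)
  ultimately show ?thesis
    unfolding core_inverse_def using aba lideal_subset_iff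
    by (metis subset_antisym)
qed

lemma inner_inverse_if_mult_square_eq:
  assumes "rideal a \<subseteq> rideal (a * a)" and "b * a * a = a"
  shows "a * b * a = a"
proof -
  obtain w where "a = a * a * w"
    using assms(1) rideal_subset_iff by blast
  then have "a * b * a = a * (b * a * a) * w"
    by (metis mult.assoc)
  then show ?thesis
    using assms(2) \<open>a = a * a * w\<close> by simp
qed

lemma rideal_subset_if_mult_square_eq:
  assumes "rideal a \<subseteq> rideal (a * a)" and "b * a * a = a" and "b = b * a * x"
  shows "rideal b \<subseteq> rideal a"
proof -
  obtain w where "a = a * a * w"
    using assms(1) rideal_subset_iff by blast
  then have "b * a = a * w"
    using assms(2) by (metis mult.assoc)
  then show ?thesis
    using assms(3) rideal_subset_iff by (metis mult.assoc)
qed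

lemma hermitian_if_inv13_factor:
  assumes "inv13 s a x" and "a * b * a = a" and "b = b * a * x"
  shows "s (a * b) = a * b"
proof -
  have "a * b = a * x"
    using assms(2,3) by (metis mult.assoc)
  then show ?thesis
    using assms(1) unfolding inv13_def by simp
qed

theorem proposition3p11:
  fixes s :: "'a::ring_1 \<Rightarrow> 'a" and a b :: 'a
  assumes "involution s"
    and "rideal a = rideal (a * a)"
  shows "(core_invertible s a \<and> core_inverse s a b
          \<longleftrightarrow> b * a * a = a \<and> s (a * b) = a * b \<and> rideal b \<subseteq> rideal a)
       \<and> (core_invertible s a \<and> core_inverse s a b
          \<longleftrightarrow> (\<exists>x. inv13 s a x) \<and> b * a * a = a \<and> (\<exists>x. inv13 s a x \<and> b = b * a * x))"
proof -
  note inv = assms(1)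
  have square: "rideal a \<subseteq> rideal (a * a)"
    using assms(2) by simp
  have core_iff: "core_invertible s a \<and> core_inverse s a b \<longleftrightarrow> core_inverse s a b"
    unfolding core_invertible_def by blast
  have core_imp: "b * a * a = a \<and> s (a * b) = a * b \<and> rideal b \<subseteq> rideal a
      \<and> inv13 s a b \<and> b = b * a * b" if "core_inverse s a b"
    using that core_inverse_mult_square[OF inv] core_inverse_hermitian[OF inv]
      core_inverse_reflexive[OF inv] core_inverse_imp_inv13[OF inv]
    unfolding core_inverse_def by auto
  have core_if: "core_inverse s a b"
    if "b * a * a = a" "s (a * b) = a * b" "rideal b \<subseteq> rideal a"
    using that core_inverseI[OF inv] inner_inverse_if_mult_square_eq[OF square] by blast
  have core_if_inv13: "core_inverse s a b"
    if "b * a * a = a" "inv13 s a x" "b = b * a * x" for x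
    using that core_if inner_inverse_if_mult_square_eq[OF square]
      hermitian_if_inv13_factor rideal_subset_if_mult_square_eq[OF square] by blast
  show ?thesis
    unfolding core_iff using core_imp core_if core_if_inv13 by metis
qed

end
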